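(* Let $n\in\mathbb N$, let $\sigma$ be a cyclic permutation of $(1,2,3,4)$ (i.e. a power of the $4$-cycle $(1\,2\,3\,4)$), and let $M=\frac{n}{2n-1}\sum_{i=1}^4\mathfrak P^{(n)}_i\otimes\mathfrak P^{(n)}_{\sigma(i)}$ acting on $\mathbb C^n\otimes\mathbb C^n$. (i) If $\sigma=\mathrm{id}$, then the largest eigenvalue of $M$ is $1$, and the corresponding eigenspace is $\mathbb C|\phi_n\rangle$. (ii) If $\sigma\neq\mathrm{id}$, then all eigenvalues of $M$ are strictly smaller than $1$.
   Context: $|\phi_n\rangle=\frac1{\sqrt n}\sum_{i=1}^n|i\rangle|i\rangle\in\mathbb C^n\otimes\mathbb C^n$ is the maximally entangled state. For $n\in\mathbb N$, $\mathfrak P^{(n)}_1,\dots,\mathfrak P^{(n)}_4\in M_n(\mathbb R)$ denote orthogonal projections (real symmetric idempotent matrices) such that (i) $\mathfrak P^{(n)}_1+\dots+\mathfrak P^{(n)}_4=(2-\frac1n)I_n$; (ii) $\operatorname{rk}\mathfrak P^{(n)}_1=\lfloor\frac n2\rfloor-(-1)^n$ and $\operatorname{rk}\mathfrak P^{(n)}_i=\lfloor\frac n2\rfloor$ for $i=2,3,4$; (iii) the only subspaces of $\mathbb C^n$ invariant under all four matrices are $0$ and $\mathbb C^n$. Such quadruples exist for every $n$, and any two of them are simultaneously unitarily equivalent; moreover, any quadruple of orthogonal projections on a Hilbert space summing to $(2-\frac1n)I$ with no nontrivial common invariant closed subspace is unitarily equivalent to one of the four cyclic shifts $(\mathfrak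 P^{(n)}_{\sigma(1)},\dots,\mathfrak P^{(n)}_{\sigma(4)})$, $\sigma$ a power of the cycle $(1\,2\,3\,4)$, and these four are pairwise inequivalent. *)

theory Defs
  imports "HOL-Analysis.Analysis"
begin

definition cmat :: "real^'n^'m \<Rightarrow> complex^'n^'m" where
  "cmat A = (\<chi> i j. complex_of_real (A $ i $ j))"

definition kron :: "'a::times^'n^'n \<Rightarrow> 'a^'n^'n \<Rightarrow> 'a^('n \<times> 'n)^('n \<times> 'n)" where
  "kron A B = (\<chi> p q. A $ fst p $ fst q * B $ snd p $ snd q)"

definition max_ent :: "complex^('n::finite \<times> 'n)" where
  "max_ent = (\<chi> p. if fst p = snd p then complex_of_real (1 / sqrt (real CARD('n))) else 0)"

definition is_eigenvalue :: "complex^'n^'n \<Rightarrow> complex \<Rightarrow> bool" where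
  "is_eigenvalue M c \<longleftrightarrow> (\<exists>v. v \<noteq> 0 \<and> M *v v = c *s v)"

definition csubspace :: "(complex^'n) set \<Rightarrow> bool" where
  "csubspace W \<longleftrightarrow> 0 \<in> W \<and> (\<forall>x\<in>W. \<forall>y\<in>W. x + y \<in> W) \<and> (\<forall>c. \<forall>x\<in>W. c *s x \<in> W)"

definition orth_proj :: "real^'n^'n \<Rightarrow> bool" where
  "orth_proj P \<longleftrightarrow> transpose P = P \<and> P ** P = P"

definition frakP_quadruple :: "(nat \<Rightarrow> real^'n::finite^'n) \<Rightarrow> bool" where
  "frakP_quadruple P \<longleftrightarrow>
     (\<forall>i\<in>{1..4}. orth_proj (P i)) \<and>
     (\<Sum>i=1..4. P i) = (2 - 1 / real CARD('n)) *\<^sub>R mat 1 \<and>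
     int (rank (P 1)) = int (CARD('n) div 2) - (-1) ^ CARD('n) \<and>
     (\<forall>i\<in>{2..4}. rank (P i) = CARD('n) div 2) \<and>
     (\<forall>W::(complex^'n) set. csubspace W \<and> (\<forall>i\<in>{1..4}. \<forall>x\<in>W. cmat (P i) *v x \<in> W)
        \<longrightarrow> W = {0} \<or> W = UNIV)"

end

theory Submission
  imports Defs
begin

text \<open>Identify \<open>\<complex>\<^sup>n \<otimes> \<complex>\<^sup>n\<close> with \<open>n \<times> n\<close> matrices, so that \<open>P \<otimes> Q\<close> acts by
  \<open>X \<mapsto> P X Q\<^sup>T\<close>, and let \<open>K = \<Sum>\<^sub>i P\<^sub>i \<otimes> P\<^bsub>\<sigma> i\<^esub>\<close> and \<open>s = 2 - 1/n\<close>, so that \<open>M = K / s\<close>.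
  Since \<open>\<Sum>\<^sub>i P\<^sub>i = s I\<close>, the quadratic form of \<open>K\<close> satisfies
  \<open>s \<parallel>X\<parallel>\<^sup>2 - \<langle>X, K X\<rangle> = \<onehalf> \<Sum>\<^sub>i \<parallel>P\<^sub>i X - X P\<^bsub>\<sigma> i\<^esub>\<parallel>\<^sup>2\<close>.
  As \<open>K\<close> is real symmetric, the eigenvalues of \<open>M\<close> are real and at most \<open>1\<close>, and the
  eigenvectors for \<open>1\<close> are the intertwiners \<open>P\<^sub>i X = X P\<^bsub>\<sigma> i\<^esub>\<close>.
  By irreducibility (Schur's lemma) \<open>X X\<^sup>T\<close> is a scalar, nonzero if \<open>X\<close> is, so a nonzero
  intertwiner is invertible and makes \<open>P\<^sub>1\<close> similar to \<open>P\<^bsub>\<sigma> 1\<^esub>\<close>; the rank condition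
  rules this out unless \<open>\<sigma> = id\<close>. For \<open>\<sigma> = id\<close> the intertwiners form the commutant, i.e.
  the scalars, and the identity matrix corresponds to \<open>\<phi>\<^sub>n\<close>.\<close>

lemma sum_UNIV_prod:
  fixes f :: "'a::finite \<times> 'b::finite \<Rightarrow> 'c::comm_monoid_add"
  shows "(\<Sum>p\<in>UNIV. f p) = (\<Sum>a\<in>UNIV. \<Sum>b\<in>UNIV. f (a, b))"
  by (simp add: sum.cartesian_product UNIV_Times_UNIV[symmetric] del: UNIV_Times_UNIV)

lemma sum_matrix_vector_mult:
  "(\<Sum>i\<in>I. A i) *v x = (\<Sum>i\<in>I. A i *v x)"
  for x :: "'a::comm_semiring_1^'m::finite"
  by (simp add: matrix_vector_mult_def vec_eq_iff sum_distrib_right sum.swap[of _ I])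

lemma scaleR_mat_1_mult: "(c *\<^sub>R mat 1) *v x = c *\<^sub>R x"
  for x :: "real^'n::finite"
  by (simp flip: scaleR_matrix_vector_assoc)

lemma matrix_add_rdistrib: "(A + B) ** C = A ** C + B ** C"
  for A :: "'a::semiring_1^'n::finite^'m"
  by (simp add: matrix_matrix_mult_def vec_eq_iff sum.distrib distrib_right)

lemma matrix_mult_uminus_left: "(- A) ** B = - (A ** B)"
  for A :: "'a::ring_1^'n::finite^'m"
  by (simp add: matrix_matrix_mult_def vec_eq_iff sum_negf)

lemma matrix_mult_uminus_right: "A ** (- B) = - (A ** B)"
  for A :: "'a::ring_1^'n::finite^'m"
  by (simp add: matrix_matrix_mult_def vec_eq_iff sum_negf)

lemma matrix_vector_mult_uminus_left: "(- A) *v x = - (A *v x)"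
  for A :: "'a::ring_1^'n::finite^'m"
  by (simp add: matrix_vector_mult_def vec_eq_iff sum_negf)

lemma transpose_sum: "transpose (\<Sum>i\<in>I. A i) = (\<Sum>i\<in>I. transpose (A i))"
  for A :: "'i \<Rightarrow> 'a::comm_monoid_add^'n^'m"
  by (simp add: transpose_def vec_eq_iff)

lemma symmetric_inner_image:
  fixes S :: "real^'n::finite^'n"
  assumes "transpose S = S"
  shows "(S *v x) \<bullet> y = x \<bullet> (S *v y)"
proof -
  have "x v* S = S *v x"
    by (metis assms transpose_matrix_vector)
  then show ?thesis
    by (simp flip: dot_lmul_matrix)
qed

lemma commute_diff_scalar:
  fixes A B :: "real^'n::finite^'n"
  assumes "A ** B = B ** A"
  shows "A ** (B - c *\<^sub>R mat 1) = (B - c *\<^sub>R mat 1) ** A"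
  unfolding matrix_eq
  using assms by (simp add: matrix_vector_mult_diff_rdistrib matrix_vector_mult_diff_distrib
      scaleR_mat_1_mult matrix_vector_mult_scaleR flip: matrix_vector_mul_assoc) (metis matrix_vector_mul_assoc)

lemma inverse_scaleR_matrix_eigen_iff:
  fixes K :: "real^'n::finite^'n"
  assumes "s \<noteq> 0"
  shows "((1 / s) *\<^sub>R K) *v x = a *\<^sub>R x \<longleftrightarrow> K *v x = (s * a) *\<^sub>R x"
  unfolding scaleR_matrix_vector_assoc[symmetric]
proof
  assume "(1 / s) *\<^sub>R (K *v x) = a *\<^sub>R x"
  then have "s *\<^sub>R ((1 / s) *\<^sub>R (K *v x)) = (s * a) *\<^sub>R x"
    by simp
  with assms show "K *v x = (s * a) *\<^sub>R x"
    by simp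
qed (use assms in simp)

lemma similar_rank_eq:
  fixes A B X Z :: "real^'n::finite^'n"
  assumes "X ** Z = mat 1" and "A ** X = X ** B"
  shows "rank A = rank B"
proof -
  have "Z ** X = mat 1"
    using assms(1) matrix_left_right_inverse by blast
  then have "B = Z ** (A ** X)" and "A = (X ** B) ** Z"
    using assms by (metis matrix_mul_assoc matrix_mul_lid matrix_mul_rid)+
  then show ?thesis
    by (metis rank_mul_le_left rank_mul_le_right order_trans antisym)
qed

section \<open>Kronecker products and vectorisation\<close>

definition vec_mat :: "'a^'n^'n \<Rightarrow> 'a^('n \<times> 'n)" where
  "vec_mat X = (\<chi> p. X $ fst p $ snd p)"

lemma vec_mat_inject [simp]: "vec_mat X = vec_mat Y \<longleftrightarrow> X = Y"
  by (auto simp add: vec_mat_def vec_eq_iff)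

lemma vec_mat_cases: obtains X where "w = vec_mat X"
  using that[of "\<chi> a b. w $ (a, b)"] by (simp add: vec_mat_def vec_eq_iff)

lemma vec_mat_sum: "vec_mat (\<Sum>i\<in>I. A i) = (\<Sum>i\<in>I. vec_mat (A i))"
  by (simp add: vec_mat_def vec_eq_iff)

lemma vec_mat_scaleR: "vec_mat (c *\<^sub>R A) = c *\<^sub>R vec_mat A"
  by (simp add: vec_mat_def vec_eq_iff)

lemma kron_mult:
  fixes A B C D :: "'a::comm_semiring_1^'n::finite^'n"
  shows "kron A B ** kron C D = kron (A ** C) (B ** D)"
  unfolding kron_def matrix_matrix_mult_def
  by (simp add: vec_eq_iff sum_UNIV_prod sum_product mult_ac)

lemma kron_transpose: "transpose (kron A B) = kron (transpose A) (transpose B)"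
  by (simp add: kron_def transpose_def vec_eq_iff)

lemma kron_sum_left:
  fixes A :: "'i \<Rightarrow> 'a::comm_semiring_1^'n::finite^'n"
  shows "kron (\<Sum>i\<in>I. A i) B = (\<Sum>i\<in>I. kron (A i) B)"
  by (simp add: kron_def vec_eq_iff sum_distrib_right)

lemma kron_sum_right:
  fixes B :: "'i \<Rightarrow> 'a::comm_semiring_1^'n::finite^'n"
  shows "kron A (\<Sum>i\<in>I. B i) = (\<Sum>i\<in>I. kron A (B i))"
  by (simp add: kron_def vec_eq_iff sum_distrib_left)

lemma kron_scaleR_left: "kron (c *\<^sub>R A) B = c *\<^sub>R kron A B"
  for A B :: "real^'n::finite^'n"
  by (simp add: kron_def vec_eq_iff)

lemma kron_scaleR_right: "kron A (c *\<^sub>R B) = c *\<^sub>R kron A B"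
  for A B :: "real^'n::finite^'n"
  by (simp add: kron_def vec_eq_iff)

lemma kron_mat_1: "kron (mat 1) (mat 1) = (mat 1 :: 'a::comm_semiring_1^('n::finite \<times> 'n)^('n \<times> 'n))"
  by (auto simp add: kron_def vec_eq_iff mat_def prod_eq_iff)

lemma kron_mult_vec_mat:
  fixes A B X :: "'a::comm_semiring_1^'n::finite^'n"
  shows "kron A B *v vec_mat X = vec_mat (A ** X ** transpose B)"
proof -
  have "(\<Sum>c\<in>UNIV. \<Sum>d\<in>UNIV. A $ a $ c * B $ b $ d * X $ c $ d)
      = (\<Sum>d\<in>UNIV. (\<Sum>c\<in>UNIV. A $ a $ c * X $ c $ d) * B $ b $ d)" for a b
    by (subst sum.swap) (simp add: sum_distrib_left sum_distrib_right mult_ac)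
  then show ?thesis
    by (simp add: kron_def vec_mat_def matrix_vector_mult_def matrix_matrix_mult_def transpose_def
        vec_eq_iff sum_UNIV_prod)
qed

lemma cmat_kron: "cmat (kron A B) = kron (cmat A) (cmat B)"
  by (simp add: cmat_def kron_def vec_eq_iff)

lemma cmat_sum: "cmat (\<Sum>i\<in>I. A i) = (\<Sum>i\<in>I. cmat (A i))"
  by (simp add: cmat_def vec_eq_iff)

lemma cmat_scaleR: "cmat (c *\<^sub>R A) = c *\<^sub>R cmat A"
  by (simp add: cmat_def vec_eq_iff of_real_def)

lemma cmat_mult: "cmat (A ** B) = cmat A ** cmat B"
  by (simp add: cmat_def matrix_matrix_mult_def vec_eq_iff)

section \<open>Real matrices acting on complex vectors\<close>

definition cvec :: "real^'m \<Rightarrow> complex^'m" where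
  "cvec x = (\<chi> p. complex_of_real (x $ p))"

definition Re_vec :: "complex^'m \<Rightarrow> real^'m" where
  "Re_vec v = (\<chi> p. Re (v $ p))"

definition Im_vec :: "complex^'m \<Rightarrow> real^'m" where
  "Im_vec v = (\<chi> p. Im (v $ p))"

lemma cvec_inject [simp]: "cvec x = cvec y \<longleftrightarrow> x = y"
  by (simp add: cvec_def vec_eq_iff)

lemma cvec_0 [simp]: "cvec 0 = 0"
  by (simp add: cvec_def vec_eq_iff)

lemma cvec_eq_0_iff [simp]: "cvec x = 0 \<longleftrightarrow> x = 0"
  by (simp add: cvec_def vec_eq_iff)

lemma cvec_scaleR: "cvec (a *\<^sub>R x) = complex_of_real a *s cvec x"
  by (simp add: cvec_def vec_eq_iff)

lemma Re_vec_cvec [simp]: "Re_vec (cvec x) = x"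
  by (simp add: Re_vec_def cvec_def vec_eq_iff)

lemma Im_vec_cvec [simp]: "Im_vec (cvec x) = 0"
  by (simp add: Im_vec_def cvec_def vec_eq_iff)

lemma cvec_Re_Im: "v = cvec (Re_vec v) + \<i> *s cvec (Im_vec v)"
  by (simp add: vec_eq_iff cvec_def Re_vec_def Im_vec_def complex_eq_iff)

lemma cmat_mult_cvec: "cmat A *v cvec x = cvec (A *v x)"
  by (simp add: cmat_def cvec_def matrix_vector_mult_def vec_eq_iff)

lemma Re_vec_cmat_mult: "Re_vec (cmat A *v v) = A *v Re_vec v"
  by (simp add: cmat_def Re_vec_def matrix_vector_mult_def vec_eq_iff Re_sum)

lemma Im_vec_cmat_mult: "Im_vec (cmat A *v v) = A *v Im_vec v"
  by (simp add: cmat_def Im_vec_def matrix_vector_mult_def vec_eq_iff Im_sum)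

lemma Re_vec_scale: "Re_vec (c *s v) = Re c *\<^sub>R Re_vec v - Im c *\<^sub>R Im_vec v"
  by (simp add: Re_vec_def Im_vec_def vec_eq_iff)

lemma Im_vec_scale: "Im_vec (c *s v) = Im c *\<^sub>R Re_vec v + Re c *\<^sub>R Im_vec v"
  by (simp add: Re_vec_def Im_vec_def vec_eq_iff)

lemma symmetric_cmat_eigenvalue:
  assumes S: "transpose S = S" and "is_eigenvalue (cmat S) c"
  shows "c \<in> \<real>" and "\<exists>x. x \<noteq> 0 \<and> S *v x = Re c *\<^sub>R x"
proof -
  obtain v where "v \<noteq> 0" and v: "cmat S *v v = c *s v"
    using assms(2) by (auto simp: is_eigenvalue_def)
  define x where "x = Re_vec v"
  define y where "y = Im_vec v"
  have Sx: "S *v x = Re c *\<^sub>R x - Im c *\<^sub>R y" and Sy: "S *v y = Im c *\<^sub>R x + Re c *\<^sub>R y"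
    using arg_cong[OF v, of Re_vec] arg_cong[OF v, of Im_vec]
    by (simp_all add: x_def y_def Re_vec_cmat_mult Im_vec_cmat_mult Re_vec_scale Im_vec_scale)
  have "x \<noteq> 0 \<or> y \<noteq> 0"
    using \<open>v \<noteq> 0\<close> cvec_Re_Im[of v] by (auto simp: x_def y_def)
  then have "x \<bullet> x + y \<bullet> y \<noteq> 0"
    by (metis add_nonneg_pos add_pos_nonneg inner_ge_zero inner_gt_zero_iff less_irrefl)
  moreover have "Im c * (x \<bullet> x + y \<bullet> y) = 0"
    using symmetric_inner_image[OF S, of x y] unfolding Sx Sy
    by (simp add: inner_diff_left inner_add_right inner_commute algebra_simps)
  ultimately have "Im c = 0" by simp
  then show "c \<in> \<real>"
    by (simp add: complex_is_Real_iff)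
  show "\<exists>x. x \<noteq> 0 \<and> S *v x = Re c *\<^sub>R x"
    using Sx Sy \<open>Im c = 0\<close> \<open>x \<noteq> 0 \<or> y \<noteq> 0\<close> by auto
qed

lemma cmat_fixed_space:
  assumes "S *v u = u" and fixed: "\<And>x. S *v x = x \<Longrightarrow> \<exists>t. x = t *\<^sub>R u"
  shows "{v. cmat S *v v = v} = range (\<lambda>c. c *s cvec u)"
proof (intro set_eqI iffI)
  fix v assume "v \<in> range (\<lambda>c. c *s cvec u)"
  then show "v \<in> {v. cmat S *v v = v}"
    using assms(1) by (auto simp: cmat_mult_cvec vector_scalar_commute)
next
  fix v assume "v \<in> {v. cmat S *v v = v}"
  then have "cmat S *v v = v" by simp
  from arg_cong[OF this, of Re_vec] arg_cong[OF this, of Im_vec]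
  obtain a b where "Re_vec v = a *\<^sub>R u" "Im_vec v = b *\<^sub>R u"
    using fixed by (metis Re_vec_cmat_mult Im_vec_cmat_mult)
  then have "v = Complex a b *s cvec u"
    using cvec_Re_Im[of v] by (simp add: vec_eq_iff cvec_def complex_eq_iff)
  then show "v \<in> range (\<lambda>c. c *s cvec u)" by blast
qed

section \<open>Sums of tensor products of projections\<close>

lemma orth_proj_mat_1: "orth_proj (mat 1)"
  by (simp add: orth_proj_def)

lemma orth_proj_kron: "orth_proj P \<Longrightarrow> orth_proj Q \<Longrightarrow> orth_proj (kron P Q)"
  by (simp add: orth_proj_def kron_transpose kron_mult)

lemma orth_proj_pair_defect:
  assumes A: "orth_proj A" and B: "orth_proj B"
  shows "x \<bullet> (A *v x) + x \<bullet> (B *v x) - 2 * (x \<bullet> ((A ** B) *v x)) = (norm (A *v x - B *v x))\<^sup>2"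
proof -
  have AA: "(A *v x) \<bullet> (A *v x) = x \<bullet> (A *v x)" and BB: "(B *v x) \<bullet> (B *v x) = x \<bullet> (B *v x)"
    using A B by (simp_all add: symmetric_inner_image matrix_vector_mul_assoc orth_proj_def)
  have "(A *v x) \<bullet> (B *v x) = x \<bullet> ((A ** B) *v x)"
    using A by (simp add: symmetric_inner_image matrix_vector_mul_assoc orth_proj_def)
  with AA BB show ?thesis
    by (simp add: power2_norm_eq_inner inner_diff_left inner_diff_right inner_commute)
qed

lemma kron_sum_defect:
  fixes P Q :: "'i \<Rightarrow> real^'n::finite^'n"
  assumes "\<forall>i\<in>I. orth_proj (P i)" "\<forall>i\<in>I. orth_proj (Q i)"
    and "(\<Sum>i\<in>I. P i) = s *\<^sub>R mat 1" "(\<Sum>i\<in>I. Q i) = s *\<^sub>R mat 1"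
  shows "s * (w \<bullet> w) - w \<bullet> ((\<Sum>i\<in>I. kron (P i) (Q i)) *v w)
       = (\<Sum>i\<in>I. (norm (kron (P i) (mat 1) *v w - kron (mat 1) (Q i) *v w))\<^sup>2) / 2"
proof -
  have "(\<Sum>i\<in>I. kron (P i) (mat 1)) = s *\<^sub>R mat 1" "(\<Sum>i\<in>I. kron (mat 1) (Q i)) = s *\<^sub>R mat 1"
    using assms by (simp_all add: kron_scaleR_left kron_scaleR_right kron_mat_1
        flip: kron_sum_left kron_sum_right)
  then have "(\<Sum>i\<in>I. w \<bullet> (kron (P i) (mat 1) *v w)) = s * (w \<bullet> w)"
    "(\<Sum>i\<in>I. w \<bullet> (kron (mat 1) (Q i) *v w)) = s * (w \<bullet> w)"
    by (simp_all add: scaleR_mat_1_mult flip: inner_sum_right sum_matrix_vector_mult)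
  moreover have "(norm (kron (P i) (mat 1) *v w - kron (mat 1) (Q i) *v w))\<^sup>2
      = w \<bullet> (kron (P i) (mat 1) *v w) + w \<bullet> (kron (mat 1) (Q i) *v w) - 2 * (w \<bullet> (kron (P i) (Q i) *v w))"
    if "i \<in> I" for i
    using orth_proj_pair_defect[of "kron (P i) (mat 1)" "kron (mat 1) (Q i)" w] assms that
    by (simp add: orth_proj_kron orth_proj_mat_1 kron_mult)
  ultimately show ?thesis
    by (simp add: sum_subtractf sum.distrib inner_sum_right sum_matrix_vector_mult
        flip: sum_distrib_left)
qed

lemma kron_sum_quadratic_le:
  fixes P Q :: "'i \<Rightarrow> real^'n::finite^'n"
  assumes "\<forall>i\<in>I. orth_proj (P i)" "\<forall>i\<in>I. orth_proj (Q i)"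
    and "(\<Sum>i\<in>I. P i) = s *\<^sub>R mat 1" "(\<Sum>i\<in>I. Q i) = s *\<^sub>R mat 1"
  shows "w \<bullet> ((\<Sum>i\<in>I. kron (P i) (Q i)) *v w) \<le> s * (w \<bullet> w)"
proof -
  have "0 \<le> (\<Sum>i\<in>I. (norm (kron (P i) (mat 1) *v w - kron (mat 1) (Q i) *v w))\<^sup>2)"
    by (simp add: sum_nonneg)
  then show ?thesis
    using kron_sum_defect[OF assms, of w] by linarith
qed

lemma kron_sum_quadratic_eq_imp_intertwines:
  fixes P Q :: "'i \<Rightarrow> real^'n::finite^'n"
  assumes "finite I" and P: "\<forall>i\<in>I. orth_proj (P i)" and Q: "\<forall>i\<in>I. orth_proj (Q i)"
    and "(\<Sum>i\<in>I. P i) = s *\<^sub>R mat 1" "(\<Sum>i\<in>I. Q i) = s *\<^sub>R mat 1"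
    and eq: "vec_mat X \<bullet> ((\<Sum>i\<in>I. kron (P i) (Q i)) *v vec_mat X) = s * (vec_mat X \<bullet> vec_mat X)"
  shows "\<forall>i\<in>I. P i ** X = X ** Q i"
proof
  fix i assume i: "i \<in> I"
  define d where "d i = (norm (kron (P i) (mat 1) *v vec_mat X - kron (mat 1) (Q i) *v vec_mat X))\<^sup>2" for i
  have "(\<Sum>i\<in>I. d i) = 0"
    using kron_sum_defect[OF P Q assms(4,5), of "vec_mat X"] eq by (simp add: d_def)
  then have "d i = 0"
    using sum_nonneg_eq_0_iff[OF \<open>finite I\<close>, of d] i by (simp add: d_def)
  then have "kron (P i) (mat 1) *v vec_mat X = kron (mat 1) (Q i) *v vec_mat X"
    by (simp add: d_def)
  then show "P i ** X = X ** Q i"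
    using Q i by (simp add: kron_mult_vec_mat orth_proj_def)
qed

lemma normalized_kron_sum_eigenvalue:
  fixes P Q :: "'i \<Rightarrow> real^'n::finite^'n"
  assumes "finite I" and P: "\<forall>i\<in>I. orth_proj (P i)" and Q: "\<forall>i\<in>I. orth_proj (Q i)"
    and sums: "(\<Sum>i\<in>I. P i) = s *\<^sub>R mat 1" "(\<Sum>i\<in>I. Q i) = s *\<^sub>R mat 1" and "s > 0"
    and eig: "is_eigenvalue (cmat ((1 / s) *\<^sub>R (\<Sum>i\<in>I. kron (P i) (Q i)))) c"
  shows "c \<in> \<real>" and "Re c \<le> 1"
    and "Re c = 1 \<Longrightarrow> \<exists>X. X \<noteq> 0 \<and> (\<forall>i\<in>I. P i ** X = X ** Q i)"
proof -
  define K where "K = (\<Sum>i\<in>I. kron (P i) (Q i))"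
  have "transpose K = K"
    unfolding K_def transpose_sum
    by (rule sum.cong) (use P Q in \<open>auto simp: kron_transpose orth_proj_def\<close>)
  then have "transpose ((1 / s) *\<^sub>R K) = (1 / s) *\<^sub>R K"
    by (simp add: transpose_scalar)
  note eigenvector = symmetric_cmat_eigenvalue[OF this eig[folded K_def]]
  show "c \<in> \<real>"
    by (rule eigenvector(1))
  obtain x where "x \<noteq> 0" and "((1 / s) *\<^sub>R K) *v x = Re c *\<^sub>R x"
    using eigenvector(2) by blast
  then have x: "K *v x = (s * Re c) *\<^sub>R x"
    using \<open>s > 0\<close> by (simp add: inverse_scaleR_matrix_eigen_iff)
  obtain X where X: "x = vec_mat X"
    by (rule vec_mat_cases)
  have "s * Re c * (x \<bullet> x) \<le> s * (x \<bullet> x)"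
    using kron_sum_quadratic_le[OF P Q sums, of x] by (simp add: K_def[symmetric] x)
  then show "Re c \<le> 1"
    using \<open>s > 0\<close> \<open>x \<noteq> 0\<close> by simp
  assume "Re c = 1"
  with x have "vec_mat X \<bullet> (K *v vec_mat X) = s * (vec_mat X \<bullet> vec_mat X)"
    by (simp add: X)
  then have "\<forall>i\<in>I. P i ** X = X ** Q i"
    unfolding K_def by (rule kron_sum_quadratic_eq_imp_intertwines[OF \<open>finite I\<close> P Q sums])
  with \<open>x \<noteq> 0\<close> show "\<exists>X. X \<noteq> 0 \<and> (\<forall>i\<in>I. P i ** X = X ** Q i)"
    by (auto simp: X vec_mat_def vec_eq_iff)
qed

section \<open>Schur's lemma for irreducible families\<close>

definition irreducible_family :: "'i set \<Rightarrow> ('i \<Rightarrow> real^'n::finite^'n) \<Rightarrow> bool" where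
  "irreducible_family I P \<longleftrightarrow>
     (\<forall>W::(complex^'n) set. csubspace W \<and> (\<forall>i\<in>I. \<forall>x\<in>W. cmat (P i) *v x \<in> W)
        \<longrightarrow> W = {0} \<or> W = UNIV)"

lemma commutant_eigenvector_imp_scalar:
  assumes irr: "irreducible_family I P" and comm: "\<forall>i\<in>I. P i ** T = T ** P i"
    and "v \<noteq> 0" "cmat T *v v = c *s v"
  shows "cmat T *v w = c *s w"
proof -
  define W where "W = {v. cmat T *v v = c *s v}"
  have "csubspace W"
    by (auto simp: csubspace_def W_def matrix_vector_right_distrib vector_scalar_commute
        vector_smult_assoc mult.commute vector_add_ldistrib)
  moreover have "cmat (P i) *v x \<in> W" if "i \<in> I" "x \<in> W" for i x
  proof -
    have "cmat T *v (cmat (P i) *v x) = cmat (P i) *v (cmat T *v x)"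
      using comm that by (simp add: matrix_vector_mul_assoc flip: cmat_mult)
    with that show ?thesis by (simp add: W_def vector_scalar_commute)
  qed
  ultimately have "W = {0} \<or> W = UNIV"
    using irr unfolding irreducible_family_def by blast
  with assms(3,4) show ?thesis by (auto simp: W_def)
qed

lemma psd_quadratic_zero_imp_kernel:
  fixes T :: "real^'m::finite^'m"
  assumes T: "transpose T = T" and psd: "\<And>y. 0 \<le> y \<bullet> (T *v y)" and x: "x \<bullet> (T *v x) = 0"
  shows "T *v x = 0"
proof -
  define a where "a = (T *v x) \<bullet> (T *v x)"
  define b where "b = (T *v x) \<bullet> (T *v (T *v x))"
  have "b \<ge> 0" using psd b_def by simp
  have expand: "(x + t *\<^sub>R (T *v x)) \<bullet> (T *v (x + t *\<^sub>R (T *v x))) = 2 * t * a + t * t * b" for t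
    using x symmetric_inner_image[OF T, of x "T *v x"]
    by (simp add: matrix_vector_right_distrib matrix_vector_mult_scaleR inner_add_left
        inner_add_right a_def b_def inner_commute algebra_simps)
  \<comment> \<open>at this \<open>t\<close> the form takes the value \<open>-a\<^sup>2 (b + 2) / (b + 1)\<^sup>2\<close>\<close>
  define t where "t = - a / (b + 1)"
  have "0 \<le> (2 * t * a + t * t * b) * ((b + 1) * (b + 1))"
    using psd[of "x + t *\<^sub>R (T *v x)"] expand \<open>b \<ge> 0\<close> by simp
  also have "\<dots> = 2 * a * (t * (b + 1)) * (b + 1) + (t * (b + 1)) * (t * (b + 1)) * b"
    by (simp add: algebra_simps)
  also have "t * (b + 1) = - a"
    using \<open>b \<ge> 0\<close> by (simp add: t_def)
  also have "2 * a * (- a) * (b + 1) + (- a) * (- a) * b = - (a * a) * (b + 2)"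
    by (simp add: algebra_simps)
  finally have "a * a \<le> 0"
    using \<open>b \<ge> 0\<close> by (simp add: mult_le_0_iff)
  then have "a = 0"
    by (metis mult_eq_0_iff order_antisym zero_le_square)
  then show ?thesis
    by (simp add: a_def)
qed

lemma symmetric_matrix_has_eigenvector:
  fixes S :: "real^'n::finite^'n"
  assumes S: "transpose S = S"
  obtains x \<mu> where "x \<noteq> 0" "S *v x = \<mu> *\<^sub>R x"
proof -
  have "\<exists>x\<in>sphere 0 1. \<forall>y\<in>sphere 0 1. y \<bullet> (S *v y) \<le> x \<bullet> (S *v x)"
    by (intro continuous_attains_sup continuous_intros) simp_all
  then obtain x where x: "norm x = 1" and max: "\<And>y. norm y = 1 \<Longrightarrow> y \<bullet> (S *v y) \<le> x \<bullet> (S *v x)"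
    by auto
  define \<mu> where "\<mu> = x \<bullet> (S *v x)"
  define T where "T = \<mu> *\<^sub>R mat 1 - S"
  have Tv: "T *v y = \<mu> *\<^sub>R y - S *v y" for y
    by (simp add: T_def matrix_vector_mult_diff_rdistrib scaleR_mat_1_mult)
  have "0 \<le> y \<bullet> (T *v y)" for y
  proof (cases "y = 0")
    case False
    then have "((1 / norm y) *\<^sub>R y) \<bullet> (S *v ((1 / norm y) *\<^sub>R y)) \<le> \<mu>"
      using max[of "(1 / norm y) *\<^sub>R y"] by (simp add: \<mu>_def)
    then have "y \<bullet> (S *v y) \<le> \<mu> * (norm y)\<^sup>2"
      using False by (simp add: matrix_vector_mult_scaleR power2_eq_square field_simps)
    then show ?thesis
      by (simp add: Tv inner_diff_right power2_norm_eq_inner)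
  qed simp
  moreover have "x \<bullet> (T *v x) = 0"
    using x by (simp add: Tv inner_diff_right \<mu>_def flip: power2_norm_eq_inner)
  moreover have "transpose T = T"
    using S by (simp add: T_def transpose_def vec_eq_iff mat_def)
  ultimately have "T *v x = 0"
    using psd_quadratic_zero_imp_kernel by blast
  with x show thesis
    by (intro that[of x \<mu>]) (auto simp: Tv)
qed

lemma cmat_scalar_imp_scalar:
  assumes "\<And>w. cmat T *v w = complex_of_real a *s w"
  shows "T = a *\<^sub>R mat 1"
proof -
  have "cvec (T *v y) = cvec (a *\<^sub>R y)" for y
    using assms[of "cvec y"] by (simp add: cmat_mult_cvec cvec_scaleR)
  then show ?thesis
    by (simp add: matrix_eq scaleR_mat_1_mult)
qed

lemma symmetric_commutant_scalar:
  assumes irr: "irreducible_family I P" and S: "transpose S = S"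
    and comm: "\<forall>i\<in>I. P i ** S = S ** P i"
  obtains a where "S = a *\<^sub>R mat 1"
proof -
  obtain x \<mu> where x: "x \<noteq> 0" "S *v x = \<mu> *\<^sub>R x"
    using symmetric_matrix_has_eigenvector[OF S] .
  have "cmat S *v w = complex_of_real \<mu> *s w" for w
    by (rule commutant_eigenvector_imp_scalar[OF irr comm, of "cvec x"])
      (use x in \<open>simp_all add: cmat_mult_cvec cvec_scaleR\<close>)
  then show thesis
    using that cmat_scalar_imp_scalar by blast
qed

lemma skew_commutant_zero:
  assumes irr: "irreducible_family I P" and Y: "transpose Y = - Y"
    and comm: "\<forall>i\<in>I. P i ** Y = Y ** P i"
  shows "Y = 0"
proof (rule ccontr)
  assume "Y \<noteq> 0"
  then obtain e where e: "Y *v e \<noteq> 0"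
    by (metis matrix_eq matrix_vector_mult_0)
  have "\<forall>i\<in>I. P i ** (transpose Y ** Y) = (transpose Y ** Y) ** P i"
    using comm by (simp add: Y matrix_mult_uminus_left matrix_mult_uminus_right matrix_mul_assoc)
      (metis matrix_mul_assoc)
  then obtain d where d: "transpose Y ** Y = d *\<^sub>R mat 1"
    using symmetric_commutant_scalar[OF irr] by (metis matrix_transpose_mul transpose_transpose)
  have YY: "Y *v (Y *v e) = (- d) *\<^sub>R e"
    using arg_cong[OF d, of "\<lambda>A. A *v e"] Y
    by (simp add: scaleR_mat_1_mult matrix_vector_mult_uminus_left minus_equation_iff
        flip: matrix_vector_mul_assoc)
  have "(Y *v e) \<bullet> (Y *v e) = d * (e \<bullet> e)"
    using dot_lmul_matrix[of e "transpose Y" "Y *v e"]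
    by (simp add: matrix_vector_mul_assoc d scaleR_mat_1_mult)
  moreover have "e \<bullet> e > 0"
    using e by (metis inner_gt_zero_iff matrix_vector_mult_0_right)
  ultimately have "d \<ge> 0"
    by (metis inner_ge_zero zero_le_mult_iff not_less)
  define r where "r = sqrt d"
  define v where "v = complex_of_real r *s cvec e - \<i> *s cvec (Y *v e)"
  \<comment> \<open>\<open>Y\<close> acts like a complex structure scaled by \<open>r\<close>, so it has the eigenvalue \<open>\<i> r\<close>\<close>
  have "cmat Y *v v = complex_of_real r *s cvec (Y *v e) - \<i> *s cvec (Y *v (Y *v e))"
    by (simp add: v_def matrix_vector_mult_diff_distrib vector_scalar_commute cmat_mult_cvec)
  also have "\<dots> = (\<i> * complex_of_real r) *s v"
    using \<open>d \<ge> 0\<close> by (simp add: YY v_def r_def cvec_def vec_eq_iff complex_eq_iff)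
  finally have v: "cmat Y *v v = (\<i> * complex_of_real r) *s v" .
  have "v \<noteq> 0"
  proof
    assume "v = 0"
    then have "Im_vec v = 0"
      by (simp add: Im_vec_def vec_eq_iff)
    moreover have "Im_vec v = - (Y *v e)"
      by (simp add: v_def Im_vec_def cvec_def vec_eq_iff)
    ultimately show False
      using e by simp
  qed
  from commutant_eigenvector_imp_scalar[OF irr comm this v]
  have "cmat Y *v cvec e = (\<i> * complex_of_real r) *s cvec e" .
  from arg_cong[OF this, of Re_vec] have "Y *v e = 0"
    by (simp add: Re_vec_cmat_mult Re_vec_scale)
  with e show False ..
qed

lemma commutant_scalar:
  assumes irr: "irreducible_family I P" and P: "\<forall>i\<in>I. transpose (P i) = P i"
    and comm: "\<forall>i\<in>I. P i ** X = X ** P i"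
  obtains a where "X = a *\<^sub>R mat 1"
proof -
  have comm_t: "\<forall>i\<in>I. P i ** transpose X = transpose X ** P i"
    using comm P by (metis matrix_transpose_mul)
  obtain b where b: "X + transpose X = b *\<^sub>R mat 1"
    using symmetric_commutant_scalar[OF irr, of "X + transpose X"] comm comm_t
    by (simp add: transpose_def vec_eq_iff matrix_add_ldistrib matrix_add_rdistrib add.commute) blast
  define Y where "Y = X - (b / 2) *\<^sub>R mat 1"
  have b_entries: "X $ i $ j + X $ j $ i = (if i = j then b else 0)" for i j
    using arg_cong[OF b, of "\<lambda>A. A $ i $ j"] by (simp add: transpose_def mat_def)
  have "transpose Y = - Y"
  proof -
    have "transpose Y $ i $ j = (- Y) $ i $ j" for i j
    proof (cases "i = j")
      case True
      then show ?thesis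
        using b_entries[of i i] by (simp add: Y_def transpose_def mat_def)
    next
      case False
      then show ?thesis
        using b_entries[of j i] by (simp add: Y_def transpose_def mat_def eq_neg_iff_add_eq_0)
    qed
    then show ?thesis
      by (simp add: vec_eq_iff)
  qed
  moreover have "\<forall>i\<in>I. P i ** Y = Y ** P i"
    using comm by (simp add: Y_def commute_diff_scalar)
  ultimately have "Y = 0"
    by (rule skew_commutant_zero[OF irr])
  then show thesis
    using that[of "b / 2"] by (simp add: Y_def)
qed

lemma nonzero_intertwiner_right_invertible:
  fixes P :: "'i \<Rightarrow> real^'n::finite^'n"
  assumes irr: "irreducible_family I P" and P: "\<forall>i\<in>I. transpose (P i) = P i"
    and \<sigma>: "\<forall>i\<in>I. \<sigma> i \<in> I" and rel: "\<forall>i\<in>I. P i ** X = X ** P (\<sigma> i)" and "X \<noteq> 0"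
  obtains Z where "X ** Z = mat 1"
proof -
  have "P (\<sigma> i) ** transpose X = transpose X ** P i" if "i \<in> I" for i
    using arg_cong[of _ _ transpose, OF rel[rule_format, OF that]] P \<sigma> that
    by (simp add: matrix_transpose_mul)
  then have "\<forall>i\<in>I. P i ** (X ** transpose X) = (X ** transpose X) ** P i"
    using rel by (simp add: matrix_mul_assoc) (metis matrix_mul_assoc)
  then obtain a where a: "X ** transpose X = a *\<^sub>R mat 1"
    using symmetric_commutant_scalar[OF irr] by (metis matrix_transpose_mul transpose_transpose)
  obtain y where y: "transpose X *v y \<noteq> 0"
    using \<open>X \<noteq> 0\<close> by (metis matrix_eq matrix_vector_mult_0 transpose_iff transpose_mat mat_0)
  have "X *v (transpose X *v y) = a *\<^sub>R y"
    unfolding matrix_vector_mul_assoc a by (rule scaleR_mat_1_mult)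
  then have "(transpose X *v y) \<bullet> (transpose X *v y) = a * (y \<bullet> y)"
    using dot_lmul_matrix[of y X "transpose X *v y"] by simp
  with y have "a \<noteq> 0"
    by auto
  then show thesis
    by (intro that[of "(1 / a) *\<^sub>R transpose X"])
      (simp add: matrix_scalar_ac a flip: scalar_matrix_assoc)
qed

lemma normalized_kron_sum_fixed_space:
  fixes P :: "'i \<Rightarrow> real^'n::finite^'n"
  assumes "finite I" and irr: "irreducible_family I P" and P: "\<forall>i\<in>I. orth_proj (P i)"
    and sum: "(\<Sum>i\<in>I. P i) = s *\<^sub>R mat 1" and "s > 0" and "t \<noteq> 0"
  shows "{v. cmat ((1 / s) *\<^sub>R (\<Sum>i\<in>I. kron (P i) (P i))) *v v = v}
       = range (\<lambda>c. c *s cvec (t *\<^sub>R vec_mat (mat 1)))"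
proof (rule cmat_fixed_space)
  define K where "K = (\<Sum>i\<in>I. kron (P i) (P i))"
  have "K *v vec_mat (mat 1) = (\<Sum>i\<in>I. vec_mat (P i))"
    unfolding K_def sum_matrix_vector_mult
    by (rule sum.cong) (use P in \<open>auto simp: kron_mult_vec_mat orth_proj_def\<close>)
  then have "K *v vec_mat (mat 1) = s *\<^sub>R vec_mat (mat 1)"
    by (simp add: sum vec_mat_scaleR flip: vec_mat_sum)
  with \<open>s > 0\<close> show "((1 / s) *\<^sub>R K) *v (t *\<^sub>R vec_mat (mat 1)) = t *\<^sub>R vec_mat (mat 1)"
    by (simp add: matrix_vector_mult_scaleR flip: scaleR_matrix_vector_assoc)
  fix x assume "((1 / s) *\<^sub>R K) *v x = x"
  then have Kx: "K *v x = s *\<^sub>R x"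
    using \<open>s > 0\<close> inverse_scaleR_matrix_eigen_iff[of s K x 1] by simp
  obtain X where X: "x = vec_mat X"
    by (rule vec_mat_cases)
  have "\<forall>i\<in>I. P i ** X = X ** P i"
    by (rule kron_sum_quadratic_eq_imp_intertwines[OF \<open>finite I\<close> P P sum sum])
      (simp add: Kx[unfolded K_def] X[symmetric])
  then obtain a where "X = a *\<^sub>R mat 1"
    using commutant_scalar[OF irr] P by (auto simp: orth_proj_def)
  with \<open>t \<noteq> 0\<close> show "\<exists>b. x = b *\<^sub>R (t *\<^sub>R vec_mat (mat 1))"
    by (intro exI[of _ "a / t"]) (simp add: X vec_mat_scaleR)
qed

section \<open>The quadruple and its cyclic shifts\<close>

lemma cyclic_shift_cases:
  assumes "\<exists>k::nat. \<forall>i\<in>{1..4}. \<sigma> i = (i - 1 + k) mod 4 + 1"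
  shows "(\<sigma> 1, \<sigma> 2, \<sigma> 3, \<sigma> 4) \<in> {(1, 2, 3, 4), (2, 3, 4, 1), (3, 4, 1, 2), (4, 1, 2, 3)}"
proof -
  obtain k where "\<forall>i\<in>{1..4}. \<sigma> i = (i - 1 + k) mod 4 + 1"
    using assms by blast
  then have "\<sigma> 1 = k mod 4 + 1" "\<sigma> 2 = (k + 1) mod 4 + 1" "\<sigma> 3 = (k + 2) mod 4 + 1"
    "\<sigma> 4 = (k + 3) mod 4 + 1"
    by (auto simp: add.commute)
  then show ?thesis
    by simp presburger
qed

lemma cyclic_shift_bij:
  assumes "\<exists>k::nat. \<forall>i\<in>{1..4}. \<sigma> i = (i - 1 + k) mod 4 + 1"
  shows "bij_betw \<sigma> {1..4} {1..4}"
proof -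
  have "{1..4::nat} = {1, 2, 3, 4}"
    by auto
  then show ?thesis
    using cyclic_shift_cases[OF assms] by (auto simp: bij_betw_def inj_on_def)
qed

lemma cyclic_shift_id:
  assumes "\<exists>k::nat. \<forall>i\<in>{1..4}. \<sigma> i = (i - 1 + k) mod 4 + 1" and "\<sigma> 1 = 1"
  shows "\<forall>i\<in>{1..4}. \<sigma> i = i"
proof -
  have "{1..4::nat} = {1, 2, 3, 4}"
    by auto
  then show ?thesis
    using cyclic_shift_cases[OF assms(1)] assms(2) by auto
qed

lemma frakP_quadruple_irreducible: "frakP_quadruple P \<Longrightarrow> irreducible_family {1..4} P"
  by (simp add: frakP_quadruple_def irreducible_family_def)

lemma frakP_quadruple_no_shifted_intertwiner:
  fixes P :: "nat \<Rightarrow> real^'n::finite^'n"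
  assumes P: "frakP_quadruple P" and \<sigma>: "bij_betw \<sigma> {1..4} {1..4}" "\<sigma> 1 \<noteq> 1"
    and rel: "\<forall>i\<in>{1..4}. P i ** X = X ** P (\<sigma> i)"
  shows "X = 0"
proof (rule ccontr)
  assume "X \<noteq> 0"
  moreover have "\<forall>i\<in>{1..4}. transpose (P i) = P i"
    using P by (simp add: frakP_quadruple_def orth_proj_def)
  moreover have "\<forall>i\<in>{1..4}. \<sigma> i \<in> {1..4}"
    using bij_betw_apply[OF \<sigma>(1)] by blast
  ultimately obtain Z where "X ** Z = mat 1"
    using nonzero_intertwiner_right_invertible[OF frakP_quadruple_irreducible[OF P]] rel by metis
  then have "rank (P 1) = rank (P (\<sigma> 1))"
    by (rule similar_rank_eq) (use rel in simp)
  moreover have "\<sigma> 1 \<in> {2..4}"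
    using \<sigma> bij_betw_apply[OF \<sigma>(1), of 1] by auto
  ultimately show False
    using P by (auto simp: frakP_quadruple_def)
qed

lemma frakP_quadruple_shift:
  assumes "frakP_quadruple P" and \<sigma>: "bij_betw \<sigma> {1..4} {1..4}"
  shows "\<forall>i\<in>{1..4}. orth_proj (P (\<sigma> i))"
    and "(\<Sum>i=1..4. P (\<sigma> i)) = (2 - 1 / real CARD('n)) *\<^sub>R (mat 1 :: real^'n::finite^'n)"
  using assms sum.reindex_bij_betw[OF \<sigma>, of P] bij_betw_apply[OF \<sigma>]
  by (auto simp: frakP_quadruple_def)

lemma normalization_constant:
  shows "2 - 1 / real CARD('n::finite) > 0"
    and "real CARD('n) / (2 * real CARD('n) - 1) = 1 / (2 - 1 / real CARD('n))"
proof -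
  have "real CARD('n) \<ge> 1"
    by (simp add: Suc_le_eq)
  then have "1 < 2 * real CARD('n)"
    by linarith
  then show "2 - 1 / real CARD('n) > 0" "real CARD('n) / (2 * real CARD('n) - 1) = 1 / (2 - 1 / real CARD('n))"
    by (simp_all add: field_simps)
qed

lemma max_ent_vec_mat: "max_ent = cvec ((1 / sqrt (real CARD('n))) *\<^sub>R vec_mat (mat 1 :: real^'n::finite^'n))"
  by (simp add: max_ent_def cvec_def vec_mat_def mat_def vec_eq_iff)

lemma max_ent_neq_0: "max_ent \<noteq> 0"
proof -
  have "max_ent $ (a, a) \<noteq> 0" for a
    by (simp add: max_ent_def)
  then show ?thesis
    by (metis zero_index)
qed

lemma fixed_space_imp_eigenvalue_1:
  assumes "{v. M *v v = v} = range (\<lambda>c. c *s u)" and "u \<noteq> 0"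
  shows "is_eigenvalue M 1"
proof -
  have "u \<in> {v. M *v v = v}"
    unfolding assms(1) by (rule range_eqI[of _ _ 1]) simp
  with assms(2) show ?thesis
    by (auto simp: is_eigenvalue_def)
qed

theorem lemma4p1:
  fixes P :: "nat \<Rightarrow> real^'n::finite^'n"
    and \<sigma> :: "nat \<Rightarrow> nat"
    and M :: "complex^('n \<times> 'n)^('n \<times> 'n)"
  assumes "frakP_quadruple P"
    and "\<exists>k::nat. \<forall>i\<in>{1..4}. \<sigma> i = (i - 1 + k) mod 4 + 1"
    and "M = (real CARD('n) / (2 * real CARD('n) - 1)) *\<^sub>R
               (\<Sum>i=1..4. kron (cmat (P i)) (cmat (P (\<sigma> i))))"
  shows "((\<forall>i\<in>{1..4}. \<sigma> i = i) \<longrightarrow>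
            is_eigenvalue M 1 \<and>
            (\<forall>c. is_eigenvalue M c \<longrightarrow> c \<in> \<real> \<and> Re c \<le> 1) \<and>
            {v. M *v v = v} = range (\<lambda>c. c *s max_ent))
       \<and> ((\<exists>i\<in>{1..4}. \<sigma> i \<noteq> i) \<longrightarrow>
            (\<forall>c. is_eigenvalue M c \<longrightarrow> c \<in> \<real> \<and> Re c < 1))"
proof -
  define s where "s = 2 - 1 / real CARD('n)"
  have "s > 0" and M: "M = cmat ((1 / s) *\<^sub>R (\<Sum>i=1..4. kron (P i) (P (\<sigma> i))))"
    using normalization_constant[where 'n = 'n] assms(3)
    by (simp_all add: s_def cmat_scaleR cmat_sum cmat_kron)
  have P: "\<forall>i\<in>{1..4}. orth_proj (P i)" and sum: "(\<Sum>i=1..4. P i) = s *\<^sub>R mat 1"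
    using assms(1) by (simp_all add: frakP_quadruple_def s_def)
  have \<sigma>: "bij_betw \<sigma> {1..4} {1..4}"
    using cyclic_shift_bij[OF assms(2)] .
  note shift = frakP_quadruple_shift[OF assms(1) \<sigma>, folded s_def]
  note eigenvalue = normalized_kron_sum_eigenvalue[OF _ P shift(1) sum shift(2) \<open>s > 0\<close>, folded M, simplified]
  show ?thesis
  proof (intro conjI impI allI)
    assume "\<forall>i\<in>{1..4}. \<sigma> i = i"
    then show fixed: "{v. M *v v = v} = range (\<lambda>c. c *s max_ent)"
      using normalized_kron_sum_fixed_space[OF _ frakP_quadruple_irreducible[OF assms(1)] P sum \<open>s > 0\<close>]
      by (simp add: M max_ent_vec_mat)
    show "is_eigenvalue M 1"
      using fixed max_ent_neq_0 by (rule fixed_space_imp_eigenvalue_1)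
  next
    fix c assume "is_eigenvalue M c"
    then show "c \<in> \<real>" "Re c \<le> 1" "c \<in> \<real>"
      using eigenvalue by blast+
  next
    fix c assume "\<exists>i\<in>{1..4}. \<sigma> i \<noteq> i" and "is_eigenvalue M c"
    moreover have "\<sigma> 1 \<noteq> 1"
      using cyclic_shift_id[OF assms(2)] \<open>\<exists>i\<in>{1..4}. \<sigma> i \<noteq> i\<close> by blast
    ultimately show "Re c < 1"
      using eigenvalue(2,3) frakP_quadruple_no_shifted_intertwiner[OF assms(1) \<sigma>] by fastforce
  qed
qed

end
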